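(* Let $\alpha=1$ and $\lambda\in\mathbb{N}$. Let $\phi(x;\lambda)$, $\lambda=0,1,2,\dots$, be defined by $\phi(x;0)=1$, $\phi(x;1)=\frac{I_1(x)}{I_0(x)}$ and $$\phi(x;\lambda+1)+\phi(x;\lambda-1)=\frac{2\lambda}{x}\frac{\phi(x;\lambda)}{1-\phi^2(x;\lambda)}.$$ Let $$y(x)=\frac{\phi(x;\lambda+1)}{\phi(x;\lambda)},\qquad R(x)=y'(x)+y^2(x)+\frac{(1-2\lambda)y(x)}{x}+1,\qquad g(s;1,\lambda)=1-\frac{2}{R(\sqrt s)},$$ $$\mathcal{H}(s;1,\lambda)=\frac{(sg'(s;1,\lambda))^2}{4g(s;1,\lambda)(g(s;1,\lambda)-1)^2}-\frac{(\lambda+g(s;1,\lambda))^2}{4g(s;1,\lambda)}+\frac{sg(s;1,\lambda)}{4(g(s;1,\lambda)-1)}.$$ Then $g(s;1,\lambda)$ is a closed-form solution of $$g''=\frac{3g-1}{2g(g-1)}(g')^2-\frac{g'}{s}+\frac{(g-1)^2}{2s^2}\left(g-\frac{\lambda^2}{g}\right)+\frac{g}{2s}$$ (i.e. $P_V(\frac12,-\frac{\lambda^2}{2},\frac12,0)$), and $\mathcal{H}(s;1,\lambda)$ is the corresponding solution of $(s\mathcal{H}'')^2=\mathcal{H}'(4\mathcal{H}'-1)(\mathcal{H}-s\mathcal{H}')+\frac1{16}\left[4(1+\lambda)\mathcal{H}'-\lambda\right]^2$.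
   Context: $I_k$ denotes the modified Bessel function of the first kind of order $k$; primes denote derivatives. *)

theory Defs
  imports "HOL-Analysis.Analysis"
begin

definition besselI :: "nat \<Rightarrow> real \<Rightarrow> real" where
  "besselI k x = (\<Sum>m. (x / 2) ^ (2 * m + k) / (fact m * fact (m + k)))"

fun phi :: "real \<Rightarrow> nat \<Rightarrow> real" where
  "phi x 0 = 1"
| "phi x (Suc 0) = besselI 1 x / besselI 0 x"
| "phi x (Suc (Suc n)) =
     2 * real (Suc n) / x * phi x (Suc n) / (1 - (phi x (Suc n))^2) - phi x n"

definition yfun :: "nat \<Rightarrow> real \<Rightarrow> real" where
  "yfun lam x = phi x (lam + 1) / phi x lam"

definition Rfun :: "nat \<Rightarrow> real \<Rightarrow> real" where
  "Rfun lam x = deriv (yfun lam) x + (yfun lam x)^2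
                + (1 - 2 * real lam) * yfun lam x / x + 1"

definition gfun :: "nat \<Rightarrow> real \<Rightarrow> real" where
  "gfun lam s = 1 - 2 / Rfun lam (sqrt s)"

definition Hfun :: "nat \<Rightarrow> real \<Rightarrow> real" where
  "Hfun lam s =
     (s * deriv (gfun lam) s)^2 / (4 * gfun lam s * (gfun lam s - 1)^2)
     - (real lam + gfun lam s)^2 / (4 * gfun lam s)
     + s * gfun lam s / (4 * (gfun lam s - 1))"

end

theory Submission
  imports Defs
begin

(* For lambda = 0 the pair phi(.;0) = 1, phi(.;1) = I_1/I_0 solves the coupled Riccati system
     a' = -(1 - a^2) b + n a / x,    b' = (1 - b^2) a - (n + 1) b / x
   with n = 0, by the Bessel identities I_0' = I_1 and I_1' = I_0 - I_1/x.  The recursion defining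
   phi is precisely the Baecklund step c = 2 (n + 1) b / (x (1 - b^2)) - a, which maps a solution
   (a, b) at level n to the solution (b, c) at level n + 1, so every pair (phi(.;n), phi(.;n+1))
   solves the system.  Along it q = 1 - phi(.;lambda)^2 and y = phi(.;lambda+1)/phi(.;lambda)
   satisfy a closed polynomial system, R equals 2 + 2 q y^2 - 4 lambda y / x, and differentiating twice
   yields a second-order equation for R which becomes P_V for g(s) = 1 - 2/R(sqrt s) after the
   substitution s = x^2.  The sigma-form is then the standard consequence of P_V for the
   Jimbo-Miwa-Okamoto Hamiltonian H, whose derivative is H' = g/(4 (g - 1)). *)

section \<open>Modified Bessel functions\<close>

definition besselI_coeff :: "nat \<Rightarrow> nat \<Rightarrow> real" where
  "besselI_coeff k m = inverse (fact m * fact (m + k))"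

definition besselI_reduced :: "nat \<Rightarrow> real \<Rightarrow> real" where
  "besselI_reduced k z = (\<Sum>m. besselI_coeff k m * z ^ m)"

lemma summable_besselI_reduced: "summable (\<lambda>m. besselI_coeff k m * z ^ m)"
proof (rule summable_comparison_test[OF _ summable_exp[of "\<bar>z\<bar>"]])
  have "0 \<le> besselI_coeff k m" "besselI_coeff k m \<le> inverse (fact m)" for m
    unfolding besselI_coeff_def using fact_ge_1[of "m + k", where 'a = real]
    by (simp_all add: field_simps)
  then show "\<exists>N. \<forall>m\<ge>N. norm (besselI_coeff k m * z ^ m) \<le> inverse (fact m) * \<bar>z\<bar> ^ m"
    by (auto simp: abs_mult power_abs intro!: mult_right_mono)
qed

lemma diffs_besselI_coeff: "diffs (besselI_coeff k) = besselI_coeff (Suc k)"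
proof
  fix m
  have "fact (Suc (m + k)) = real (Suc (m + k)) * fact (m + k)" "fact (Suc m) = real (Suc m) * fact m"
    by simp_all
  then show "diffs (besselI_coeff k) m = besselI_coeff (Suc k) m"
    unfolding diffs_def besselI_coeff_def
    by (simp add: inverse_mult_distrib del: fact_Suc of_nat_Suc)
qed

lemma has_field_derivative_besselI_reduced [derivative_intros]:
  assumes "(f has_field_derivative f') (at x within S)"
  shows "((\<lambda>x. besselI_reduced k (f x)) has_field_derivative besselI_reduced (Suc k) (f x) * f')
           (at x within S)"
proof -
  have "(besselI_reduced k has_field_derivative besselI_reduced (Suc k) z) (at z)" for z
    using termdiffs_strong_converges_everywhere[OF summable_besselI_reduced]
    unfolding diffs_besselI_coeff besselI_reduced_def[abs_def] .
  from DERIV_chain2[OF this assms] show ?thesis .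
qed

lemma besselI_eq_reduced: "besselI k x = (x / 2) ^ k * besselI_reduced k (x^2 / 4)"
proof -
  have "besselI k x = (\<Sum>m. (x / 2) ^ k * (besselI_coeff k m * (x^2 / 4) ^ m))"
    unfolding besselI_def
  proof (rule suminf_cong)
    fix m
    have "(x / 2) ^ (2 * m + k) = (x / 2) ^ k * ((x / 2)^2) ^ m"
      by (simp add: power_add power_mult[symmetric] mult.commute)
    then show "(x / 2) ^ (2 * m + k) / (fact m * fact (m + k)) =
        (x / 2) ^ k * (besselI_coeff k m * (x^2 / 4) ^ m)"
      by (simp add: besselI_coeff_def power_divide field_simps)
  qed
  also have "\<dots> = (x / 2) ^ k * besselI_reduced k (x^2 / 4)"
    unfolding besselI_reduced_def by (rule suminf_mult[OF summable_besselI_reduced])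
  finally show ?thesis .
qed

lemma besselI_reduced_0_ge_1: "0 \<le> z \<Longrightarrow> 1 \<le> besselI_reduced 0 z"
  using sum_le_suminf[OF summable_besselI_reduced, of "{0}" 0 z]
  by (simp add: besselI_reduced_def besselI_coeff_def)

lemma besselI_coeff_recurrence:
  "besselI_coeff 0 (Suc m) - besselI_coeff 1 (Suc m) = besselI_coeff 2 m"
proof -
  have f1: "fact (Suc m) = real (m + 1) * fact m" by simp
  have f2: "fact (Suc m + 1) = real (m + 2) * real (m + 1) * fact m"
    by (simp add: algebra_simps)
  have f3: "fact (m + 2) = real (m + 2) * real (m + 1) * fact m"
    by (simp add: algebra_simps numeral_2_eq_2)
  have "inverse ((n + 1) * f * ((n + 1) * f)) - inverse ((n + 1) * f * ((n + 2) * (n + 1) * f))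
      = inverse (f * ((n + 2) * (n + 1) * f))"
    if "f \<noteq> 0" "n \<ge> 0" for f n :: real
    using that by (simp add: inverse_eq_divide divide_simps)
  from this[of "fact m" "real m"] show ?thesis
    unfolding besselI_coeff_def f1 f2 f3 by (simp add: algebra_simps)
qed

lemma besselI_reduced_recurrence:
  "besselI_reduced 0 z = besselI_reduced 1 z + z * besselI_reduced 2 z"
proof -
  let ?c = "\<lambda>k m. besselI_coeff k m * z ^ m"
  have "(\<lambda>m. ?c 0 m - ?c 1 m) sums (besselI_reduced 0 z - besselI_reduced 1 z)"
    unfolding besselI_reduced_def by (intro sums_diff summable_sums summable_besselI_reduced)
  then have "(\<lambda>m. ?c 0 (Suc m) - ?c 1 (Suc m)) sums (besselI_reduced 0 z - besselI_reduced 1 z)"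
    by (subst sums_Suc_iff) (simp add: besselI_coeff_def)
  moreover have "?c 0 (Suc m) - ?c 1 (Suc m) = z * ?c 2 m" for m
    by (simp add: besselI_coeff_recurrence[symmetric] algebra_simps)
  moreover have "(\<lambda>m. z * ?c 2 m) sums (z * besselI_reduced 2 z)"
    unfolding besselI_reduced_def by (intro sums_mult summable_sums summable_besselI_reduced)
  ultimately show ?thesis
    using sums_unique2 by fastforce
qed

lemma has_real_derivative_phi_1:
  assumes "0 < x"
  shows "((\<lambda>t. phi t 1) has_real_derivative 1 - (phi x 1)^2 - phi x 1 / x) (at x)"
proof -
  define F0 F1 F2 where "F0 = besselI_reduced 0 (x^2 / 4)" and "F1 = besselI_reduced 1 (x^2 / 4)"
    and "F2 = besselI_reduced 2 (x^2 / 4)"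
  have phi_1: "phi t 1 = t / 2 * besselI_reduced 1 (t^2 / 4) / besselI_reduced 0 (t^2 / 4)" for t
    by (simp add: besselI_eq_reduced)
  have F0: "1 \<le> F0" unfolding F0_def by (rule besselI_reduced_0_ge_1) simp
  have "((\<lambda>t. phi t 1) has_real_derivative
          ((F1 / 2 + x / 2 * (F2 * (x / 2))) * F0 - x / 2 * F1 * (F1 * (x / 2))) / F0^2) (at x)"
    unfolding phi_1 F0_def F1_def F2_def using F0
    by (auto intro!: derivative_eq_intros simp: F0_def power2_eq_square numeral_2_eq_2 field_simps)
  moreover have "((F1 / 2 + x / 2 * (F2 * (x / 2))) * F0 - x / 2 * F1 * (F1 * (x / 2))) / F0^2
      = 1 - (x / 2 * F1 / F0)^2 - x / 2 * F1 / F0 / x"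
  proof -
    have F2: "F2 = (F0 - F1) / (x^2 / 4)"
      using besselI_reduced_recurrence[of "x^2 / 4"] assms unfolding F0_def F1_def F2_def
      by (simp add: field_simps)
    show ?thesis
      unfolding F2 using F0 assms by (simp add: field_simps power2_eq_square)
  qed
  ultimately show ?thesis
    unfolding phi_1 F0_def F1_def by simp
qed

section \<open>The coupled Riccati system\<close>

definition riccati_pair :: "real \<Rightarrow> (real \<Rightarrow> real) \<Rightarrow> (real \<Rightarrow> real) \<Rightarrow> real \<Rightarrow> bool" where
  "riccati_pair n a b x \<longleftrightarrow>
     (a has_real_derivative - (1 - (a x)^2) * b x + n * a x / x) (at x) \<and>
     (b has_real_derivative (1 - (b x)^2) * a x - (n + 1) * b x / x) (at x)"

lemma riccati_pair_step:
  assumes ab: "riccati_pair n a b x" and x: "x \<noteq> 0" and b: "1 - (b x)^2 \<noteq> 0"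
  shows "riccati_pair (n + 1) b (\<lambda>t. 2 * (n + 1) / t * b t / (1 - (b t)^2) - a t) x"
proof -
  define c where "c = 2 * (n + 1) / x * b x / (1 - (b x)^2) - a x"
  define e where "e = 1 - (b x)^2"
  have a': "(a has_real_derivative - (1 - (a x)^2) * b x + n * a x / x) (at x)"
    and b': "(b has_real_derivative (1 - (b x)^2) * a x - (n + 1) * b x / x) (at x)"
    using ab unfolding riccati_pair_def by auto
  have "(1 - (b x)^2) * a x - (n + 1) * b x / x = - (1 - (b x)^2) * c + (n + 1) * b x / x"
    using x b unfolding c_def by (simp add: field_simps)
  with b' have "(b has_real_derivative - (1 - (b x)^2) * c + (n + 1) * b x / x) (at x)"
    by simp
  moreover have "((\<lambda>t. 2 * (n + 1) / t * b t / (1 - (b t)^2) - a t) has_real_derivative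
      (1 - c^2) * b x - (n + 1 + 1) * c / x) (at x)"
    using x b
    apply (auto intro!: derivative_eq_intros a' b')
    unfolding c_def e_def[symmetric] using x b[folded e_def]
    apply (simp add: field_simps)
    unfolding e_def apply algebra
    done
  ultimately show ?thesis
    unfolding riccati_pair_def c_def[symmetric] by simp
qed

definition phi_regular :: "nat \<Rightarrow> real set" where
  "phi_regular n = {x. 0 < x \<and> (\<forall>j. 1 \<le> j \<and> j \<le> n \<longrightarrow> 1 - (phi x j)^2 \<noteq> 0)}"

lemma riccati_pair_phi:
  "x \<in> phi_regular n \<Longrightarrow> riccati_pair (real n) (\<lambda>t. phi t n) (\<lambda>t. phi t (Suc n)) x"
proof (induction n)
  case 0
  then show ?case
    using has_real_derivative_phi_1 unfolding riccati_pair_def phi_regular_def by auto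
next
  case (Suc n)
  then have x: "0 < x" "x \<in> phi_regular n" "1 - (phi x (Suc n))^2 \<noteq> 0"
    unfolding phi_regular_def by auto
  have "(\<lambda>t. phi t (Suc (Suc n))) =
      (\<lambda>t. 2 * (real n + 1) / t * phi t (Suc n) / (1 - (phi t (Suc n))^2) - phi t n)"
    by (simp add: fun_eq_iff)
  with riccati_pair_step[OF Suc.IH[OF x(2)] _ x(3)] x(1) show ?case
    by (simp add: add.commute)
qed

lemma continuous_on_phi_regular:
  "continuous_on (phi_regular n) (\<lambda>t. phi t n)"
  "continuous_on (phi_regular n) (\<lambda>t. phi t (Suc n))"
  using riccati_pair_phi[of _ n]
  by (auto simp: riccati_pair_def intro!: continuous_at_imp_continuous_on DERIV_isCont)

lemma open_phi_regular: "open (phi_regular n)"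
proof (induction n)
  case 0
  have "phi_regular 0 = {0<..}" by (auto simp: phi_regular_def)
  then show ?case by simp
next
  case (Suc n)
  have "phi_regular (Suc n) = phi_regular n \<inter> (\<lambda>t. 1 - (phi t (Suc n))^2) -` (- {0})"
    by (auto simp: phi_regular_def le_Suc_eq)
  moreover have "continuous_on (phi_regular n) (\<lambda>t. 1 - (phi t (Suc n))^2)"
    by (intro continuous_intros continuous_on_phi_regular)
  ultimately show ?case
    using continuous_open_preimage[OF _ Suc.IH open_Compl[OF closed_singleton]] by simp
qed

lemma riccati_pair_ratio:
  fixes a b :: "real \<Rightarrow> real" and l x :: real
  defines "q \<equiv> \<lambda>t. 1 - (a t)^2" and "y \<equiv> \<lambda>t. b t / a t"
  assumes ab: "riccati_pair l a b x" and a: "a x \<noteq> 0" and x: "x \<noteq> 0"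
  shows "(q has_real_derivative 2 * (1 - q x) * (q x * y x - l / x)) (at x)"
    and "(y has_real_derivative 1 + (2 * q x - 1) * (y x)^2 - (2 * l + 1) * y x / x) (at x)"
proof -
  have a': "(a has_real_derivative - (1 - (a x)^2) * b x + l * a x / x) (at x)"
    and b': "(b has_real_derivative (1 - (b x)^2) * a x - (l + 1) * b x / x) (at x)"
    using ab unfolding riccati_pair_def by auto
  show "(q has_real_derivative 2 * (1 - q x) * (q x * y x - l / x)) (at x)"
    unfolding q_def y_def using a
    by (auto intro!: derivative_eq_intros a' simp: field_simps power2_eq_square)
  show "(y has_real_derivative 1 + (2 * q x - 1) * (y x)^2 - (2 * l + 1) * y x / x) (at x)"
    unfolding q_def y_def using a x
    by (auto intro!: derivative_eq_intros a' b' simp: field_simps power2_eq_square)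
qed

section \<open>From the Riccati system to Painleve V\<close>

(* P_V for g(s) = 1 - 2 / R(sqrt s), written as an equation for R in the variable x = sqrt s. *)
definition painleve5_R :: "real \<Rightarrow> (real \<Rightarrow> real) \<Rightarrow> real \<Rightarrow> bool" where
  "painleve5_R l R x \<longleftrightarrow>
     R x * (R x - 2) * deriv (deriv R) x =
       (R x - 1) * (deriv R x)^2 - R x * (R x - 2) * deriv R x / x
       + 4 * ((R x - 2)^2 - l^2 * (R x)^2) / x^2 + (R x)^2 * (R x - 2)^2"

definition painleve5 :: "real \<Rightarrow> (real \<Rightarrow> real) \<Rightarrow> real \<Rightarrow> bool" where
  "painleve5 l g s \<longleftrightarrow>
     deriv (deriv g) s =
       (3 * g s - 1) / (2 * g s * (g s - 1)) * (deriv g s)^2 - deriv g s / s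
       + (g s - 1)^2 / (2 * s^2) * (g s - l^2 / g s) + g s / (2 * s)"

lemma riccati_system_R_eq:
  assumes "t \<noteq> 0"
    and "(y has_real_derivative 1 + (2 * q t - 1) * (y t)^2 - (2 * l + 1) * y t / t) (at t)"
  shows "deriv y t + (y t)^2 + (1 - 2 * l) * y t / t + 1 = 2 + 2 * q t * (y t)^2 - 4 * l * y t / t"
  using assms by (simp add: DERIV_imp_deriv field_simps power2_eq_square)

lemma painleve5_R_of_riccati_system:
  fixes q y R :: "real \<Rightarrow> real" and l x :: real
  assumes S: "open S" "0 \<notin> S" "x \<in> S"
    and q': "\<And>t. t \<in> S \<Longrightarrow> (q has_real_derivative 2 * (1 - q t) * (q t * y t - l / t)) (at t)"
    and y': "\<And>t. t \<in> S \<Longrightarrow>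
               (y has_real_derivative 1 + (2 * q t - 1) * (y t)^2 - (2 * l + 1) * y t / t) (at t)"
    and R: "\<And>t. t \<in> S \<Longrightarrow> R t = deriv y t + (y t)^2 + (1 - 2 * l) * y t / t + 1"
  shows "(R has_real_derivative deriv R x) (at x)"
    and "(deriv R has_real_derivative deriv (deriv R) x) (at x)"
    and "painleve5_R l R x"
proof -
  have nz: "t \<noteq> 0" if "t \<in> S" for t
    using that S(2) by auto
  define R1 where "R1 t = 4 * (q t)^2 * (y t)^3 - 4 * (3 * l + 1) * q t * (y t)^2 / t + 4 * q t * y t
      - 4 * l / t + 8 * l * (l + 1) * y t / t^2" for t
  have R_poly: "R t = 2 + 2 * q t * (y t)^2 - 4 * l * y t / t" if "t \<in> S" for t
    unfolding R[OF that] by (rule riccati_system_R_eq[OF nz y'] that)+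
  have R1: "(R has_real_derivative R1 t) (at t)" if t: "t \<in> S" for t
  proof (rule has_field_derivative_transform_within_open[OF _ S(1) t])
    show "((\<lambda>t. 2 + 2 * q t * (y t)^2 - 4 * l * y t / t) has_real_derivative R1 t) (at t)"
      unfolding R1_def using nz[OF t]
      by (auto intro!: derivative_eq_intros q'[OF t] y'[OF t]
          simp: field_simps power2_eq_square power3_eq_cube)
  qed (use R_poly in simp)
  then have deriv_R: "deriv R t = R1 t" if "t \<in> S" for t
    using DERIV_imp_deriv that by blast
  show "(R has_real_derivative deriv R x) (at x)"
    using R1[OF S(3)] by (simp add: deriv_R S(3))
  define dq dy where "dq = 2 * (1 - q x) * (q x * y x - l / x)"
    and "dy = 1 + (2 * q x - 1) * (y x)^2 - (2 * l + 1) * y x / x"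
  define R2 where "R2 = 8 * q x * dq * (y x)^3 + 12 * (q x)^2 * (y x)^2 * dy
      - 4 * (3 * l + 1) * (dq * (y x)^2 + 2 * q x * y x * dy) / x
      + 4 * (3 * l + 1) * q x * (y x)^2 / x^2 + 4 * (dq * y x + q x * dy)
      + 4 * l / x^2 + 8 * l * (l + 1) * (dy / x^2 - 2 * y x / x^3)"
  have "(R1 has_real_derivative R2) (at x)"
    unfolding R1_def[abs_def] R2_def dq_def dy_def using nz[OF S(3)]
    by (auto intro!: derivative_eq_intros q'[OF S(3)] y'[OF S(3)]
        simp: field_simps power2_eq_square power3_eq_cube)
  then have R2: "(deriv R has_real_derivative R2) (at x)"
    by (rule has_field_derivative_transform_within_open[OF _ S(1,3)]) (simp add: deriv_R)
  then show "(deriv R has_real_derivative deriv (deriv R) x) (at x)"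
    by (simp add: DERIV_imp_deriv)
  show "painleve5_R l R x"
    unfolding painleve5_R_def DERIV_imp_deriv[OF R2] deriv_R[OF S(3)] R_poly[OF S(3)]
      R1_def R2_def dq_def dy_def using nz[OF S(3)]
    by (simp add: field_simps) algebra
qed

lemma has_real_derivative_sqrt_substitution:
  fixes R :: "real \<Rightarrow> real" and s :: real
  defines "g \<equiv> \<lambda>s. 1 - 2 / R (sqrt s)" and "x \<equiv> sqrt s"
  assumes X: "open X" "X \<subseteq> {0<..}" "x \<in> X"
    and R_nz: "\<And>x. x \<in> X \<Longrightarrow> R x \<noteq> 0"
    and R': "\<And>x. x \<in> X \<Longrightarrow> (R has_real_derivative deriv R x) (at x)"
    and R'': "(deriv R has_real_derivative deriv (deriv R) x) (at x)"
  shows "(g has_real_derivative deriv R x / ((R x)^2 * x)) (at s)"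
    and "(deriv g has_real_derivative
           (deriv (deriv R) x / ((R x)^2 * x) - 2 * (deriv R x)^2 / ((R x)^3 * x)
            - deriv R x / ((R x)^2 * x^2)) / (2 * x)) (at s)"
proof -
  define T where "T = sqrt -` X"
  have T: "open T" "s \<in> T"
    using X unfolding T_def x_def by (auto intro!: open_vimage continuous_intros)
  have T_pos: "0 < t" if "t \<in> T" for t
    using that X(2) unfolding T_def by auto
  have chain_sqrt: "((\<lambda>t. f (sqrt t)) has_real_derivative f' * (inverse (sqrt t) / 2)) (at t)"
    if "(f has_real_derivative f') (at (sqrt t))" "0 < t" for f f' t
    using DERIV_chain2[OF that(1) DERIV_real_sqrt[OF that(2)]] .
  define g1 where "g1 t = deriv R (sqrt t) / ((R (sqrt t))^2 * sqrt t)" for t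
  have g1: "(g has_real_derivative g1 t) (at t)" if t: "t \<in> T" for t
  proof -
    have "sqrt t \<in> X" "0 < t" using t T_pos unfolding T_def by auto
    with R_nz show ?thesis
      unfolding g_def g1_def
      by (auto intro!: derivative_eq_intros chain_sqrt R' simp: field_simps power2_eq_square)
  qed
  then show "(g has_real_derivative deriv R x / ((R x)^2 * x)) (at s)"
    using T(2) unfolding g1_def x_def .
  have s: "0 < s" "0 < x" using T_pos[OF T(2)] unfolding x_def by auto
  have hR: "((\<lambda>t. R (sqrt t)) has_real_derivative deriv R x * (inverse x / 2)) (at s)"
    using chain_sqrt[OF R'[OF X(3)[unfolded x_def]] s(1)] unfolding x_def .
  have hR': "((\<lambda>t. deriv R (sqrt t)) has_real_derivative deriv (deriv R) x * (inverse x / 2)) (at s)"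
    using chain_sqrt[OF R''[unfolded x_def] s(1)] unfolding x_def .
  have hsqrt: "(sqrt has_real_derivative inverse x / 2) (at s)"
    using DERIV_real_sqrt[OF s(1)] unfolding x_def .
  have "(g1 has_real_derivative
      (deriv (deriv R) x / ((R x)^2 * x) - 2 * (deriv R x)^2 / ((R x)^3 * x)
       - deriv R x / ((R x)^2 * x^2)) / (2 * x)) (at s)"
    unfolding g1_def[abs_def] using s R_nz[OF X(3)]
    by (auto intro!: derivative_eq_intros hR hR' hsqrt
        simp: x_def[symmetric] field_simps power2_eq_square power3_eq_cube)
  then show "(deriv g has_real_derivative
      (deriv (deriv R) x / ((R x)^2 * x) - 2 * (deriv R x)^2 / ((R x)^3 * x)
       - deriv R x / ((R x)^2 * x^2)) / (2 * x)) (at s)"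
    by (rule has_field_derivative_transform_within_open[OF _ T]) (metis g1 DERIV_imp_deriv)
qed

lemma painleve5_of_painleve5_R:
  fixes R :: "real \<Rightarrow> real" and l s :: real
  defines "g \<equiv> \<lambda>s. 1 - 2 / R (sqrt s)" and "x \<equiv> sqrt s"
  assumes X: "open X" "X \<subseteq> {0<..}" "x \<in> X"
    and R_nz: "\<And>x. x \<in> X \<Longrightarrow> R x \<noteq> 0"
    and R': "\<And>x. x \<in> X \<Longrightarrow> (R has_real_derivative deriv R x) (at x)"
    and R'': "(deriv R has_real_derivative deriv (deriv R) x) (at x)"
    and R_ne_2: "R x \<noteq> 2"
    and PR: "painleve5_R l R x"
  shows "(g has_real_derivative deriv g s) (at s)"
    and "(deriv g has_real_derivative deriv (deriv g) s) (at s)"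
    and "painleve5 l g s"
proof -
  note g' = has_real_derivative_sqrt_substitution(1)[OF X[unfolded x_def] R_nz R' R''[unfolded x_def],
      folded g_def x_def]
  note g'' = has_real_derivative_sqrt_substitution(2)[OF X[unfolded x_def] R_nz R' R''[unfolded x_def],
      folded g_def x_def]
  show "(g has_real_derivative deriv g s) (at s)" "(deriv g has_real_derivative deriv (deriv g) s) (at s)"
    using g' g'' by (simp_all add: DERIV_imp_deriv)
  define r r1 r2 where "r = R x" and "r1 = deriv R x" and "r2 = deriv (deriv R) x"
  define e where "e = r - 2"
  have x: "0 < x" "s = x^2"
    using X(2,3) unfolding x_def by auto
  have r: "r \<noteq> 0" "e \<noteq> 0" "r - 2 \<noteq> 0"
    using R_nz[OF X(3)] R_ne_2 unfolding r_def e_def by auto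
  have gs: "g s = 1 - 2 / r"
    unfolding g_def r_def x_def ..
  have r2: "r2 = ((r - 1) * r1^2 - r * e * r1 / x + 4 * (e^2 - l^2 * r^2) / x^2 + r^2 * e^2) / (r * e)"
    using PR r unfolding painleve5_R_def r_def r1_def r2_def e_def by (simp add: field_simps)
  have c1: "(3 * g s - 1) / (2 * g s * (g s - 1)) = - (r - 3) * r / (2 * e)"
    using r unfolding gs e_def by (simp add: field_simps)
  have c2: "(g s - 1)^2 / (2 * s^2) * (g s - l^2 / g s) = 2 * (e^2 - l^2 * r^2) / (r^3 * e * x^4)"
    using r x(1) unfolding gs unfolding x(2) apply (simp add: field_simps)
    unfolding e_def apply algebra
    done
  have c3: "g s / (2 * s) = e / (2 * r * x^2)"
    using r x(1) unfolding gs e_def unfolding x(2) by (simp add: field_simps)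
  have d1: "deriv g s = r1 / (r^2 * x)"
    using DERIV_imp_deriv[OF g'] by (simp add: r_def r1_def)
  have d2: "deriv (deriv g) s = (r2 / (r^2 * x) - 2 * r1^2 / (r^3 * x) - r1 / (r^2 * x^2)) / (2 * x)"
    using DERIV_imp_deriv[OF g''] by (simp add: r_def r1_def r2_def)
  show "painleve5 l g s"
    unfolding painleve5_def d1 d2 c1 c2 c3
    unfolding r2 x(2) using r x(1) apply (simp add: field_simps)
    unfolding e_def apply algebra
    done
qed

section \<open>The sigma form\<close>

definition painleve5_hamiltonian :: "real \<Rightarrow> (real \<Rightarrow> real) \<Rightarrow> real \<Rightarrow> real" where
  "painleve5_hamiltonian l g s =
     (s * deriv g s)^2 / (4 * g s * (g s - 1)^2) - (l + g s)^2 / (4 * g s)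
     + s * g s / (4 * (g s - 1))"

definition sigma_painleve5 :: "real \<Rightarrow> (real \<Rightarrow> real) \<Rightarrow> real \<Rightarrow> bool" where
  "sigma_painleve5 l H s \<longleftrightarrow>
     (s * deriv (deriv H) s)^2 =
       deriv H s * (4 * deriv H s - 1) * (H s - s * deriv H s)
       + 1/16 * (4 * (1 + l) * deriv H s - l)^2"

lemma sigma_painleve5_hamiltonian:
  fixes g :: "real \<Rightarrow> real" and l s :: real
  assumes T: "open T" "0 \<notin> T" "s \<in> T"
    and g_ne: "\<And>t. t \<in> T \<Longrightarrow> g t \<noteq> 0 \<and> g t \<noteq> 1"
    and g': "\<And>t. t \<in> T \<Longrightarrow> (g has_real_derivative deriv g t) (at t)"
    and g'': "\<And>t. t \<in> T \<Longrightarrow> (deriv g has_real_derivative deriv (deriv g) t) (at t)"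
    and PV: "\<And>t. t \<in> T \<Longrightarrow> painleve5 l g t"
  shows "sigma_painleve5 l (painleve5_hamiltonian l g) s"
proof -
  let ?H = "painleve5_hamiltonian l g"
  have H': "(?H has_real_derivative g t / (4 * (g t - 1))) (at t)" if t: "t \<in> T" for t
  proof -
    define e where "e = g t - 1"
    have ne: "t \<noteq> 0" "g t \<noteq> 0" "e \<noteq> 0" using t T(2) g_ne[OF t] unfolding e_def by auto
    have e: "g t - 1 = e" "4 * g t - 4 = 4 * e" unfolding e_def by simp_all
    show ?thesis
      unfolding painleve5_hamiltonian_def[abs_def]
      using ne(1) g_ne[OF t]
      apply (auto intro!: derivative_eq_intros g'[OF t] g''[OF t])
      using PV[OF t] ne unfolding painleve5_def e
      apply (simp add: field_simps)
      unfolding e_def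
      apply algebra
      done
  qed
  have g_s: "g s \<noteq> 0" "g s - 1 \<noteq> 0" using g_ne[OF T(3)] by auto
  have "((\<lambda>t. g t / (4 * (g t - 1))) has_real_derivative - deriv g s / (4 * (g s - 1)^2)) (at s)"
    using g_s by (auto intro!: derivative_eq_intros g'[OF T(3)] simp: divide_simps)
      (simp add: algebra_simps power2_eq_square)
  then have "(deriv ?H has_real_derivative - deriv g s / (4 * (g s - 1)^2)) (at s)"
    by (rule has_field_derivative_transform_within_open[OF _ T(1,3)]) (simp add: DERIV_imp_deriv[OF H'])
  note H'' = DERIV_imp_deriv[OF this]
  define e where "e = g s - 1"
  have ne: "s \<noteq> 0" "g s \<noteq> 0" "e \<noteq> 0" using T(2,3) g_s unfolding e_def by auto
  show ?thesis
    unfolding sigma_painleve5_def DERIV_imp_deriv[OF H'[OF T(3)]] H'' painleve5_hamiltonian_def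
      e_def[symmetric]
    using ne apply (simp add: field_simps)
    unfolding e_def apply algebra
    done
qed

definition gfun_domain :: "nat \<Rightarrow> real set" where
  "gfun_domain lam =
     sqrt -` {x \<in> phi_regular lam. phi x lam \<noteq> 0 \<and> Rfun lam x \<noteq> 0 \<and> Rfun lam x \<noteq> 2}"

lemma painleve5_gfun:
  fixes lam :: nat
  defines "T \<equiv> gfun_domain lam"
  shows "open T" and "0 \<notin> T"
    and "\<And>s. s \<in> T \<Longrightarrow> gfun lam s \<noteq> 0 \<and> gfun lam s \<noteq> 1"
    and "\<And>s. s \<in> T \<Longrightarrow> (gfun lam has_real_derivative deriv (gfun lam) s) (at s)"
    and "\<And>s. s \<in> T \<Longrightarrow> (deriv (gfun lam) has_real_derivative deriv (deriv (gfun lam)) s) (at s)"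
    and "\<And>s. s \<in> T \<Longrightarrow> painleve5 (real lam) (gfun lam) s"
proof -
  define S where "S = phi_regular lam \<inter> (\<lambda>t. phi t lam) -` (- {0})"
  have S: "open S" "0 \<notin> S"
    unfolding S_def
    using continuous_open_preimage[OF continuous_on_phi_regular(1) open_phi_regular, of "- {0}" lam]
    by (auto simp del: phi_regular_def) (simp add: phi_regular_def)
  define q where "q = (\<lambda>t. 1 - (phi t lam)^2)"
  have yfun: "yfun lam = (\<lambda>t. phi t (Suc lam) / phi t lam)"
    by (simp add: fun_eq_iff yfun_def)
  have q': "(q has_real_derivative 2 * (1 - q x) * (q x * yfun lam x - real lam / x)) (at x)"
    and y': "(yfun lam has_real_derivative
               1 + (2 * q x - 1) * (yfun lam x)^2 - (2 * real lam + 1) * yfun lam x / x) (at x)"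
    if "x \<in> S" for x
    using riccati_pair_ratio[OF riccati_pair_phi] that S(2)
    unfolding S_def q_def yfun by (auto simp del: of_nat_Suc)
  note R = painleve5_R_of_riccati_system[OF S _ q' y' Rfun_def]
  define X where "X = S \<inter> Rfun lam -` (- {0, 2})"
  have "continuous_on S (Rfun lam)"
    using R(1) by (auto intro!: continuous_at_imp_continuous_on DERIV_isCont)
  then have X: "open X" "X \<subseteq> {0<..}"
    unfolding X_def using S(1) by (auto intro!: continuous_open_preimage simp: S_def phi_regular_def)
  have T: "T = sqrt -` X"
    unfolding T_def gfun_domain_def X_def S_def by auto
  have gfun: "gfun lam = (\<lambda>s. 1 - 2 / Rfun lam (sqrt s))"
    by (simp add: fun_eq_iff gfun_def)
  note P = painleve5_of_painleve5_R[OF X _ _ R(1) R(2) _ R(3), folded gfun]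
  show "open T"
    unfolding T using X(1) by (auto intro!: open_vimage continuous_intros)
  show "0 \<notin> T"
    unfolding T using X(2) by auto
  fix s assume "s \<in> T"
  then have "sqrt s \<in> X" unfolding T by simp
  then show "gfun lam s \<noteq> 0 \<and> gfun lam s \<noteq> 1"
    "(gfun lam has_real_derivative deriv (gfun lam) s) (at s)"
    "(deriv (gfun lam) has_real_derivative deriv (deriv (gfun lam)) s) (at s)"
    "painleve5 (real lam) (gfun lam) s"
    using P[of s] X(2) unfolding gfun_def X_def by auto
qed

theorem theorem11:
  fixes lam :: nat and s :: real
  assumes s_pos: "s > 0"
    and phi_nz: "phi (sqrt s) lam \<noteq> 0"
    and phi_not_pm1: "\<forall>j. 1 \<le> j \<and> j \<le> lam \<longrightarrow> 1 - (phi (sqrt s) j)^2 \<noteq> 0"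
    and R_nz: "Rfun lam (sqrt s) \<noteq> 0"
    and g_nz: "gfun lam s \<noteq> 0"
  shows "(deriv (deriv (gfun lam)) s =
           (3 * gfun lam s - 1) / (2 * gfun lam s * (gfun lam s - 1)) * (deriv (gfun lam) s)^2
           - deriv (gfun lam) s / s
           + (gfun lam s - 1)^2 / (2 * s^2) * (gfun lam s - (real lam)^2 / gfun lam s)
           + gfun lam s / (2 * s))
         \<and> ((s * deriv (deriv (Hfun lam)) s)^2 =
           deriv (Hfun lam) s * (4 * deriv (Hfun lam) s - 1) * (Hfun lam s - s * deriv (Hfun lam) s)
           + 1/16 * (4 * (1 + real lam) * deriv (Hfun lam) s - real lam)^2)"
proof -
  note P = painleve5_gfun[where lam = lam]
  have "Rfun lam (sqrt s) \<noteq> 2"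
    using g_nz unfolding gfun_def by auto
  then have s: "s \<in> gfun_domain lam"
    unfolding gfun_domain_def phi_regular_def using s_pos phi_nz phi_not_pm1 R_nz by auto
  have "Hfun lam = painleve5_hamiltonian (real lam) (gfun lam)"
    by (simp add: fun_eq_iff Hfun_def painleve5_hamiltonian_def)
  moreover have "sigma_painleve5 (real lam) (painleve5_hamiltonian (real lam) (gfun lam)) s"
    by (rule sigma_painleve5_hamiltonian[OF P(1,2) s P(3-6)])
  ultimately show ?thesis
    using P(6)[OF s] unfolding painleve5_def sigma_painleve5_def by simp
qed

end
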